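(* Let $k$ be a positive integer, let $w$ be a weight, let $Q$ be a cube in $\mathbb{R}^n$ with $\langle w\rangle_Q>0$, and let $E\subsetneq Q$ be a measurable set with $|E|>0$. Then there exists $c>0$ depending only on $k$ and $n$ such that \[ \|w\chi_E\|_{L(\log L)^k,Q}\le c\,\frac{\log^k\!\left(e+\log\frac{|Q|}{|E|}\right)}{\log\frac{|Q|}{|E|}}\,\|w\|_{L(\log L)^{k+1},Q}, \] and consequently \[ \|w\chi_E\|_{L(\log L)^k,Q}\le c\,\frac{\log^k\!\left(e+\log\frac{|Q|}{|E|}\right)}{\log\frac{|Q|}{|E|}}\,\rho_{k+1,w}(Q)\,\langle w\rangle_Q. \]
   Context: A weight is a non-negative locally integrable function; $\langle w\rangle_Q=\frac{1}{|Q|}\int_Qw$. For a cube $Q$ and $j\ge1$, $\|f\|_{L(\log L)^j,Q}=\inf\{\lambda>0:\frac{1}{|Q|}\int_Q\frac{|f|}{\lambda}\log^j(e+\frac{|f|}{\lambda})\le1\}$, and $\rho_{j,w}(Q)=\|w\|_{L(\log L)^j,Q}/\langle w\rangle_Q$. *)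

theory Defs
  imports "HOL-Analysis.Analysis"
begin

definition weight :: "(real^'n \<Rightarrow> real) \<Rightarrow> bool" where
  "weight w \<longleftrightarrow> (\<forall>x. 0 \<le> w x) \<and>
     (\<forall>K. compact K \<longrightarrow> set_integrable lebesgue K w)"

definition is_cube :: "(real^'n) set \<Rightarrow> bool" where
  "is_cube Q \<longleftrightarrow> (\<exists>a h. 0 < h \<and> Q = cbox a (a + h *\<^sub>R One))"

definition avg :: "(real^'n \<Rightarrow> real) \<Rightarrow> (real^'n) set \<Rightarrow> real" where
  "avg w Q = (1 / measure lebesgue Q) * (LINT x:Q|lebesgue. w x)"

text \<open>Luxemburg norm of L(log L)^j over Q, valued in extended reals
  (infimum of the empty set is +\<infinity>).\<close>
definition luxnorm :: "nat \<Rightarrow> (real^'n \<Rightarrow> real) \<Rightarrow> (real^'n) set \<Rightarrow> ereal" where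
  "luxnorm j f Q = Inf (ereal ` {t::real. 0 < t \<and>
      ennreal (1 / measure lebesgue Q) *
        set_nn_integral lebesgue Q
          (\<lambda>x. ennreal (\<bar>f x\<bar> / t * (ln (exp 1 + \<bar>f x\<bar> / t)) ^ j)) \<le> 1})"

definition rho :: "nat \<Rightarrow> (real^'n \<Rightarrow> real) \<Rightarrow> (real^'n) set \<Rightarrow> ereal" where
  "rho j w Q = luxnorm j w Q / ereal (avg w Q)"

end

theory Submission
  imports Defs
begin

text \<open>
  Write Phi_j(t) = t log^j(e + t), L = log(|Q|/|E|) and a = c log^k(e + L) / L. Everything rests
  on the pointwise Young-type inequality Phi_k(u/a) <= e^L/2 + Phi_{k+1}(u)/2 for u >= 0.
  If s is admissible for the L(log L)^{k+1} norm of w, apply it to u = w/s and integrate over E: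
  the first term contributes e^L |E| / (2|Q|) = 1/2 and the second at most 1/2, so a s is
  admissible for the L(log L)^k norm of w chi_E.
  The pointwise inequality is proved in three regimes: a >= 2; u so large that
  log(e + u/a) <= 2 log(e + u); and otherwise u/a <= e^{L/(2k+2)}, where Phi_k(u/a) <= e^L/2
  because a < 2 forces L > c/2.
\<close>

definition young_log :: "nat \<Rightarrow> real \<Rightarrow> real" where
  "young_log j t = t * ln (exp 1 + t) ^ j"

lemma one_le_ln_exp1_add: "0 \<le> (x::real) \<Longrightarrow> 1 \<le> ln (exp 1 + x)"
  using ln_le_cancel_iff[of "exp 1" "exp 1 + x"] by (simp add: add_pos_nonneg)

lemma young_log_nonneg: "0 \<le> t \<Longrightarrow> 0 \<le> young_log j t"
  using one_le_ln_exp1_add[of t] by (simp add: young_log_def)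

lemma young_log_ge: "0 \<le> t \<Longrightarrow> t \<le> young_log j t"
  using one_le_ln_exp1_add[of t] mult_left_mono[OF one_le_power, of "ln (exp 1 + t)" t j]
  by (simp add: young_log_def)

lemma young_log_le_power: "0 \<le> v \<Longrightarrow> young_log k v \<le> (exp 1 + v) ^ (k+1)"
proof -
  assume v: "0 \<le> v"
  have pos: "0 < exp 1 + v" using v by (simp add: add_pos_nonneg)
  have "ln (exp 1 + v) \<le> exp 1 + v" using ln_le_minus_one[OF pos] by simp
  moreover have "0 \<le> ln (exp 1 + v)" using one_le_ln_exp1_add[OF v] by simp
  ultimately have "v * ln (exp 1 + v) ^ k \<le> (exp 1 + v) * (exp 1 + v) ^ k"
    using v by (intro mult_mono power_mono) auto
  then show ?thesis by (simp add: young_log_def)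
qed

lemma div_le_max_one_inverse_mult: "0 \<le> (u::real) \<Longrightarrow> u / a \<le> max 1 (1 / a) * u"
  using mult_right_mono[of "1 / a" "max 1 (1 / a)" u] by simp

lemma ln_exp1_add_div_le:
  fixes a u :: real
  assumes a: "0 < a" and u: "0 \<le> u"
  shows "ln (exp 1 + u / a) \<le> ln (max 1 (1 / a)) + ln (exp 1 + u)"
proof -
  have "exp 1 \<le> max 1 (1 / a) * exp 1" by simp
  then have "exp 1 + u / a \<le> max 1 (1 / a) * (exp 1 + u)"
    using div_le_max_one_inverse_mult[OF u, of a] unfolding distrib_left by linarith
  then have "ln (exp 1 + u / a) \<le> ln (max 1 (1 / a) * (exp 1 + u))"
    using a u by (subst ln_le_cancel_iff) (auto intro!: mult_pos_pos add_pos_nonneg)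
  also have "\<dots> = ln (max 1 (1 / a)) + ln (exp 1 + u)"
    using u by (intro ln_mult_pos) (auto intro: add_pos_nonneg)
  finally show ?thesis .
qed

lemma young_log_div_le_of_two_le:
  fixes a u :: real
  assumes a: "2 \<le> a" and u: "0 \<le> u"
  shows "young_log k (u / a) \<le> young_log (k+1) u / 2"
proof -
  define l where "l = ln (exp 1 + u)"
  have l: "1 \<le> l" using one_le_ln_exp1_add[OF u] by (simp add: l_def)
  have "ln (exp 1 + u / a) \<le> l"
    using a u by (simp add: l_def divide_le_eq add_pos_nonneg mult_le_cancel_left1)
  then have "ln (exp 1 + u / a) ^ k \<le> l ^ k"
    using one_le_ln_exp1_add[of "u / a"] a u by (intro power_mono) auto
  then have "young_log k (u / a) \<le> u / a * l ^ k"
    using a u by (simp add: young_log_def divide_right_mono mult_left_mono)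
  also have "\<dots> \<le> u / 2 * l ^ k" using a u l by (intro mult_right_mono divide_left_mono) auto
  also have "\<dots> \<le> u / 2 * l ^ (k+1)" using u l by (intro mult_left_mono power_increasing) auto
  finally show ?thesis by (simp add: young_log_def l_def)
qed

lemma young_log_div_le_of_ln_large:
  fixes a u :: real
  assumes a: "0 < a" and u: "0 \<le> u"
    and large: "2 ^ (k+1) * max 1 (1 / a) \<le> ln (exp 1 + u)"
  shows "young_log k (u / a) \<le> young_log (k+1) u / 2"
proof -
  define b l where "b = max 1 (1 / a)" and "l = ln (exp 1 + u)"
  have b: "1 \<le> b" by (simp add: b_def)
  have "ln b \<le> b" using ln_le_minus_one[of b] b by simp
  also have "b \<le> 2 ^ (k+1) * b" using b mult_right_mono[OF one_le_power[of 2 "k+1"], of b] by simp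
  finally have "ln (exp 1 + u / a) \<le> 2 * l"
    using ln_exp1_add_div_le[OF a u] large by (simp add: b_def l_def)
  then have "ln (exp 1 + u / a) ^ k \<le> (2 * l) ^ k"
    using one_le_ln_exp1_add[of "u / a"] a u by (intro power_mono) auto
  moreover have "u / a \<le> b * u" using div_le_max_one_inverse_mult[OF u] by (simp add: b_def)
  ultimately have "young_log k (u / a) \<le> (b * u) * (2 * l) ^ k"
    unfolding young_log_def using a u b one_le_ln_exp1_add[of "u / a"] by (intro mult_mono) auto
  also have "\<dots> = u * ((2 ^ k * b) * l ^ k)" by (simp add: power_mult_distrib)
  also have "\<dots> \<le> u * ((l / 2) * l ^ k)"
    using large u b one_le_ln_exp1_add[OF u]
    by (intro mult_left_mono mult_right_mono) (auto simp: b_def l_def)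
  finally show ?thesis by (simp add: young_log_def l_def)
qed

lemma div_le_exp_of_ln_small:
  fixes a u :: real
  assumes a: "0 < a" and u: "0 \<le> u"
    and small: "ln (exp 1 + u) < 2 ^ (k+1) * max 1 (1 / a)"
  shows "u / a \<le> exp ((2 ^ (k+1) + 1) * max 1 (1 / a))"
proof -
  define b where "b = max 1 (1 / a)"
  have "u \<le> exp 1 + u" by simp
  also have "\<dots> \<le> exp (2 ^ (k+1) * b)"
    using exp_less_mono[OF small] u by (simp add: b_def add_pos_nonneg)
  finally have "b * u \<le> b * exp (2 ^ (k+1) * b)" by (simp add: b_def mult_left_mono)
  then have "u / a \<le> b * exp (2 ^ (k+1) * b)"
    using div_le_max_one_inverse_mult[OF u, of a] by (simp add: b_def)
  also have "\<dots> \<le> exp b * exp (2 ^ (k+1) * b)"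
    using exp_ge_add_one_self[of b] by (intro mult_right_mono) (linarith, simp)
  finally show ?thesis by (simp add: b_def exp_add[symmetric] distrib_right add.commute)
qed

lemma two_mult_exp1_add_one_power_le: "2 * (exp 1 + 1) ^ (k+1) \<le> exp (4 * real (k+1))"
proof -
  have e: "2 \<le> exp (1::real)" using exp_ge_add_one_self[of 1] by simp
  then have "2 * (exp 1 + 1) \<le> 2 ^ 3 * exp (1::real)" by simp
  also have "\<dots> \<le> exp 1 ^ 3 * exp 1" using power_mono[OF e, of 3] by (intro mult_right_mono) auto
  also have "\<dots> = exp 1 ^ 4" by (simp add: power_Suc2[symmetric])
  finally have "(2 * (exp 1 + 1)) ^ (k+1) \<le> (exp (1::real) ^ 4) ^ (k+1)"
    by (intro power_mono) auto
  moreover have "(2 * (exp (1::real) + 1)) ^ (k+1) = 2 * (2 ^ k * (exp 1 + 1) ^ (k+1))"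
    by (simp only: power_mult_distrib power_Suc Suc_eq_plus1[symmetric] mult_ac)
  moreover have "(exp 1 + 1) ^ (k+1) \<le> 2 ^ k * (exp (1::real) + 1) ^ (k+1)"
    using mult_right_mono[OF one_le_power[of 2 k], of "(exp (1::real) + 1) ^ (k+1)"] by simp
  moreover have "(exp (1::real) ^ 4) ^ (k+1) = exp (4 * real (k+1))"
    by (simp add: power_mult[symmetric] exp_of_nat_mult[symmetric] exp_add[symmetric] algebra_simps)
  ultimately show ?thesis by linarith
qed

lemma young_log_le_half_exp:
  assumes v: "0 \<le> v" and L: "8 * real (k+1) \<le> L"
    and v_le: "v \<le> exp (L / (2 * real (k+1)))"
  shows "young_log k v \<le> exp L / 2"
proof -
  have half: "real (k+1) * (L / (2 * real (k+1))) = L / 2"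
    by (simp add: field_simps del: of_nat_Suc)
  have "1 \<le> exp (L / (2 * real (k+1)))" using L by simp
  then have "exp 1 \<le> exp 1 * exp (L / (2 * real (k+1)))" by simp
  then have "exp 1 + v \<le> (exp 1 + 1) * exp (L / (2 * real (k+1)))"
    using v_le unfolding distrib_right by linarith
  then have "(exp 1 + v) ^ (k+1) \<le> ((exp 1 + 1) * exp (L / (2 * real (k+1)))) ^ (k+1)"
    using v by (intro power_mono) (auto intro: add_nonneg_nonneg)
  also have "\<dots> = (exp 1 + 1) ^ (k+1) * exp (real (k+1) * (L / (2 * real (k+1))))"
    by (simp only: power_mult_distrib exp_of_nat_mult)
  also have "\<dots> = (exp 1 + 1) ^ (k+1) * exp (L / 2)"
    unfolding half ..
  also have "\<dots> \<le> exp (L / 2) / 2 * exp (L / 2)"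
  proof (intro mult_right_mono)
    have "exp (4 * real (k+1)) \<le> exp (L / 2)" using L by simp
    then show "(exp 1 + 1) ^ (k+1) \<le> exp (L / 2) / 2"
      using two_mult_exp1_add_one_power_le[of k] by linarith
  qed simp
  also have "\<dots> = exp L / 2" by (simp add: exp_add[symmetric])
  finally show ?thesis using young_log_le_power[OF v, of k] by linarith
qed

definition restriction_const :: "nat \<Rightarrow> real" where
  "restriction_const k = real (k+1) * 2 ^ (k+4)"

lemma restriction_const_exponent_le:
  assumes "0 \<le> L"
  shows "(2 ^ (k+1) + 1) * (2 * L / restriction_const k) \<le> L / (2 * real (k+1))"
proof -
  have "(2 ^ (k+1) + 1) * (2 * L / restriction_const k) = (4 * 2 ^ k + 2) * L / (real (k+1) * 16 * 2 ^ k)"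
    by (simp add: restriction_const_def power_add field_simps)
  also have "\<dots> \<le> (8 * 2 ^ k) * L / (real (k+1) * 16 * 2 ^ k)"
  proof (intro divide_right_mono mult_right_mono)
    show "4 * 2 ^ k + 2 \<le> 8 * (2::real) ^ k" using one_le_power[of "2::real" k] by linarith
  qed (use assms in auto)
  also have "\<dots> = L / (2 * real (k+1))" by (simp add: divide_simps del: of_nat_Suc)
  finally show ?thesis .
qed

lemma young_log_restriction_le:
  fixes L u :: real
  assumes L: "0 < L" and u: "0 \<le> u"
  shows "young_log k (u / (restriction_const k * ln (exp 1 + L) ^ k / L))
    \<le> exp L / 2 + young_log (k+1) u / 2"
proof -
  define c a where "c = restriction_const k" and "a = c * ln (exp 1 + L) ^ k / L"
  have c: "0 < c" by (simp add: c_def restriction_const_def)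
  have "c / L * 1 \<le> c / L * ln (exp 1 + L) ^ k"
    using one_le_ln_exp1_add[of L] L c by (intro mult_left_mono one_le_power) auto
  then have ca: "c / L \<le> a" by (simp add: a_def)
  then have a: "0 < a" using c L by (meson divide_pos_pos order_less_le_trans)
  have half_young: "0 \<le> young_log (k+1) u / 2" using young_log_nonneg[OF u] by simp
  consider "2 \<le> a"
    | "a < 2" "2 ^ (k+1) * max 1 (1 / a) \<le> ln (exp 1 + u)"
    | "a < 2" "ln (exp 1 + u) < 2 ^ (k+1) * max 1 (1 / a)" by linarith
  then have "young_log k (u / a) \<le> exp L / 2 + young_log (k+1) u / 2"
  proof cases
    case 1
    then show ?thesis using young_log_div_le_of_two_le[OF 1 u, of k] exp_gt_zero[of L] by linarith
  next
    case 2
    then show ?thesis using young_log_div_le_of_ln_large[OF a u 2(2)] exp_gt_zero[of L] by linarith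
  next
    case 3
    have "c / L < 2" using ca 3(1) by simp
    then have "c / 2 < L" using c L by (simp add: field_simps)
    moreover have "c / 2 = 8 * real (k+1) * 2 ^ k" by (simp add: c_def restriction_const_def power_add)
    moreover have "8 * real (k+1) \<le> 8 * real (k+1) * 2 ^ k"
      using mult_left_mono[OF one_le_power[of "2::real" k], of "8 * real (k+1)"] by simp
    ultimately have L8: "8 * real (k+1) \<le> L" by linarith
    have "1 / a \<le> L / c" using ca c L a by (simp add: field_simps)
    moreover have "1 \<le> 2 * L / c" using \<open>c / 2 < L\<close> c by (simp add: field_simps)
    ultimately have "max 1 (1 / a) \<le> 2 * L / c" using L c by (simp add: field_simps)
    then have "(2 ^ (k+1) + 1) * max 1 (1 / a) \<le> (2 ^ (k+1) + 1) * (2 * L / c)"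
      by (rule mult_left_mono) simp
    then have "u / a \<le> exp ((2 ^ (k+1) + 1) * (2 * L / c))"
      using div_le_exp_of_ln_small[OF a u 3(2)] by (meson exp_le_cancel_iff order_trans)
    also have "\<dots> \<le> exp (L / (2 * real (k+1)))"
      using restriction_const_exponent_le[of L k] L by (simp add: c_def)
    finally have "young_log k (u / a) \<le> exp L / 2"
      using young_log_le_half_exp[OF _ L8] u a by simp
    then show ?thesis using half_young by linarith
  qed
  then show ?thesis by (simp add: a_def c_def)
qed

definition lux_modular :: "nat \<Rightarrow> (real^'n \<Rightarrow> real) \<Rightarrow> (real^'n) set \<Rightarrow> real \<Rightarrow> ennreal" where
  "lux_modular j f Q t = ennreal (1 / measure lebesgue Q) *
     set_nn_integral lebesgue Q (\<lambda>x. ennreal (young_log j (\<bar>f x\<bar> / t)))"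

lemma luxnorm_eq_Inf_lux_modular:
  "luxnorm j f Q = Inf (ereal ` {t. 0 < t \<and> lux_modular j f Q t \<le> 1})"
  by (simp add: luxnorm_def lux_modular_def young_log_def)

lemma luxnorm_le_mult_luxnorm:
  assumes a: "0 < a"
    and scale: "\<And>s. 0 < s \<Longrightarrow> lux_modular j g Q s \<le> 1 \<Longrightarrow> lux_modular k f Q (a * s) \<le> 1"
  shows "luxnorm k f Q \<le> ereal a * luxnorm j g Q"
proof -
  have "luxnorm k f Q / ereal a \<le> luxnorm j g Q"
    unfolding luxnorm_eq_Inf_lux_modular[of j]
  proof (rule Inf_greatest)
    fix y assume "y \<in> ereal ` {s. 0 < s \<and> lux_modular j g Q s \<le> 1}"
    then obtain s where s: "0 < s" "lux_modular j g Q s \<le> 1" and y: "y = ereal s" by blast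
    have "luxnorm k f Q \<le> ereal (a * s)"
      unfolding luxnorm_eq_Inf_lux_modular using a s scale by (intro Inf_lower) auto
    then show "luxnorm k f Q / ereal a \<le> y" using a y by (simp add: ereal_divide_le_pos)
  qed
  then show ?thesis using a by (simp add: ereal_divide_le_pos)
qed

lemma avg_le_luxnorm:
  fixes f :: "real^'n \<Rightarrow> real"
  assumes f: "\<And>x. 0 \<le> f x" and int: "set_integrable lebesgue Q f"
    and Q: "0 < measure lebesgue Q"
  shows "ereal (avg f Q) \<le> luxnorm j f Q"
  unfolding luxnorm_eq_Inf_lux_modular
proof (rule Inf_greatest)
  fix y assume "y \<in> ereal ` {t. 0 < t \<and> lux_modular j f Q t \<le> 1}"
  then obtain t where t: "0 < t" and mod: "lux_modular j f Q t \<le> 1" and y: "y = ereal t" by blast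
  have "ennreal ((LINT x:Q|lebesgue. f x) / t) = (\<integral>\<^sup>+x. ennreal (indicator Q x * f x / t) \<partial>lebesgue)"
    using int f t unfolding set_integrable_def set_lebesgue_integral_def
    by (subst nn_integral_eq_integral) (auto simp: less_imp_le)
  also have "\<dots> \<le> set_nn_integral lebesgue Q (\<lambda>x. ennreal (young_log j (\<bar>f x\<bar> / t)))"
    using young_log_ge[of "f _ / t" j] f t
    by (intro nn_integral_mono) (auto simp: indicator_def intro: ennreal_leI)
  finally have "ennreal (1 / measure lebesgue Q) * ennreal ((LINT x:Q|lebesgue. f x) / t) \<le> lux_modular j f Q t"
    unfolding lux_modular_def by (rule mult_left_mono) simp
  then have "ennreal (1 / measure lebesgue Q * ((LINT x:Q|lebesgue. f x) / t)) \<le> lux_modular j f Q t"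
    using Q by (subst ennreal_mult') auto
  then have "1 / measure lebesgue Q * ((LINT x:Q|lebesgue. f x) / t) \<le> 1"
    using mod by (simp add: ennreal_le_1 [symmetric] del: ennreal_le_1)
  then show "ereal (avg f Q) \<le> y" using t Q y by (simp add: avg_def field_simps)
qed

lemma lux_modular_indicator_le_one:
  fixes w :: "real^'n \<Rightarrow> real"
  assumes Q: "Q \<in> sets lebesgue" "0 < measure lebesgue Q"
    and E: "E \<in> sets lebesgue" "E \<subseteq> Q" "0 < measure lebesgue E"
    and w: "set_borel_measurable lebesgue Q w"
    and a: "0 < a" and s: "0 < s"
    and dom: "\<And>u. 0 \<le> u \<Longrightarrow>
      young_log k (u / a) \<le> measure lebesgue Q / measure lebesgue E / 2 + young_log j u / 2"
    and mod: "lux_modular j w Q s \<le> 1"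
  shows "lux_modular k (\<lambda>x. w x * indicator E x) Q (a * s) \<le> 1"
proof -
  define mQ mE where "mQ = measure lebesgue Q" and "mE = measure lebesgue E"
  define h where "h x = ennreal (young_log j (\<bar>w x\<bar> / s)) * indicator Q x" for x
  have "emeasure lebesgue E \<noteq> \<infinity>"
    using E(3) by (auto simp: measure_def)
  then have emE: "emeasure lebesgue E = ennreal mE"
    by (simp add: mE_def emeasure_eq_ennreal_measure)
  have h_eq: "h = (\<lambda>x. ennreal (young_log j (\<bar>indicator Q x *\<^sub>R w x\<bar> / s)) * indicator Q x)"
    by (auto simp: h_def indicator_def fun_eq_iff)
  have h_meas: "h \<in> borel_measurable lebesgue"
    using w Q(1) unfolding h_eq set_borel_measurable_def young_log_def by measurable
  have pointwise: "ennreal (young_log k (\<bar>w x * indicator E x\<bar> / (a * s))) * indicator Q x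
      \<le> ennreal (mQ / mE / 2) * indicator E x + ennreal (1 / 2) * h x" for x
  proof (cases "x \<in> E")
    case True
    then have "x \<in> Q" using E(2) by auto
    have u: "0 \<le> \<bar>w x\<bar> / s" using s by simp
    define y where "y = young_log j (\<bar>w x\<bar> / s)"
    have y: "0 \<le> y" using young_log_nonneg[OF u] by (simp add: y_def)
    have "young_log k (\<bar>w x * indicator E x\<bar> / (a * s)) \<le> mQ / mE / 2 + 1 / 2 * y"
      using dom[OF u] True by (simp add: mQ_def mE_def y_def mult.commute)
    then have "ennreal (young_log k (\<bar>w x * indicator E x\<bar> / (a * s)))
        \<le> ennreal (mQ / mE / 2 + 1 / 2 * y)" by (rule ennreal_leI)
    also have "\<dots> = ennreal (mQ / mE / 2) + ennreal (1 / 2) * ennreal y"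
      using y Q(2) E(3) ennreal_mult'[of "1 / 2" y] by (subst ennreal_plus) (auto simp: mQ_def mE_def)
    finally show ?thesis using True \<open>x \<in> Q\<close> by (simp add: h_def y_def)
  qed (simp add: young_log_def)
  have "set_nn_integral lebesgue Q (\<lambda>x. ennreal (young_log k (\<bar>w x * indicator E x\<bar> / (a * s))))
      \<le> (\<integral>\<^sup>+x. ennreal (mQ / mE / 2) * indicator E x + ennreal (1 / 2) * h x \<partial>lebesgue)"
    by (rule nn_integral_mono) (rule pointwise)
  also have "\<dots> = ennreal (mQ / mE / 2) * ennreal mE + ennreal (1 / 2) * integral\<^sup>N lebesgue h"
    using E(1) h_meas by (simp add: nn_integral_add nn_integral_cmult nn_integral_cmult_indicator emE)
  finally have "lux_modular k (\<lambda>x. w x * indicator E x) Q (a * s)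
      \<le> ennreal (1 / mQ) * (ennreal (mQ / mE / 2) * ennreal mE + ennreal (1 / 2) * integral\<^sup>N lebesgue h)"
    unfolding lux_modular_def mQ_def[symmetric] by (rule mult_left_mono) simp
  also have "\<dots> = ennreal (1 / mQ * (mQ / mE / 2) * mE) + ennreal (1 / 2) * lux_modular j w Q s"
    using Q(2) E(3) unfolding lux_modular_def h_def mQ_def mE_def
    by (simp add: distrib_left ennreal_mult'[symmetric] mult_ac)
  also have "\<dots> = ennreal (1 / 2) + ennreal (1 / 2) * lux_modular j w Q s"
    using Q(2) E(3) by (simp add: mQ_def mE_def)
  also have "\<dots> \<le> ennreal (1 / 2) + ennreal (1 / 2) * 1"
    using mod by (intro add_left_mono mult_left_mono) auto
  also have "\<dots> = ennreal (1 / 2 + 1 / 2)" by (subst ennreal_plus) auto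
  also have "\<dots> = 1" by simp
  finally show ?thesis .
qed

lemma is_cube_lmeasurable: "is_cube Q \<Longrightarrow> Q \<in> lmeasurable"
  by (auto simp: is_cube_def)

lemma is_cube_compact: "is_cube Q \<Longrightarrow> compact Q"
  by (auto simp: is_cube_def)

lemma is_cube_measure_pos: "is_cube Q \<Longrightarrow> 0 < measure lebesgue Q"
  by (auto simp: is_cube_def content_pos_lt inner_add_left)

lemma rho_mult_avg: "0 < avg w Q \<Longrightarrow> rho j w Q * ereal (avg w Q) = luxnorm j w Q"
  by (cases "luxnorm j w Q") (auto simp: rho_def)

lemma luxnorm_indicator_le:
  fixes w :: "real^'n \<Rightarrow> real"
  assumes w: "weight w" and Q: "is_cube Q" and avg: "0 < avg w Q"
    and E: "E \<in> sets lebesgue" "E \<subseteq> Q" "0 < measure lebesgue E"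
  defines "L \<equiv> ln (measure lebesgue Q / measure lebesgue E)"
  shows "luxnorm k (\<lambda>x. w x * indicator E x) Q
    \<le> ereal (restriction_const k) * (ereal (ln (exp 1 + L) ^ k) / ereal L) * luxnorm (k+1) w Q"
proof -
  have Q_meas: "Q \<in> sets lebesgue" and mQ: "0 < measure lebesgue Q"
    using is_cube_lmeasurable[OF Q] is_cube_measure_pos[OF Q] by auto
  have int: "set_integrable lebesgue Q w"
    using w is_cube_compact[OF Q] by (simp add: weight_def)
  then have w_meas: "set_borel_measurable lebesgue Q w"
    unfolding set_integrable_def set_borel_measurable_def by (rule borel_measurable_integrable)
  have "measure lebesgue E \<le> measure lebesgue Q"
    using measure_mono_fmeasurable[OF E(2) E(1) is_cube_lmeasurable[OF Q]] .
  then consider "measure lebesgue E = measure lebesgue Q" | "measure lebesgue E < measure lebesgue Q"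
    by linarith
  then show ?thesis
  proof cases
    case 1
    txt \<open>Then L = 0 and the factor is an ereal division by zero, i.e. \<infinity>; the hypothesis
      avg w Q > 0 is what keeps \<infinity> * luxnorm (k+1) w Q from being 0.\<close>
    then have inf: "ereal (ln (exp 1 + L) ^ k) / ereal L = \<infinity>"
      using mQ by (simp add: L_def divide_ereal_def)
    have pos: "0 < luxnorm (k+1) w Q"
      using avg avg_le_luxnorm[OF _ int mQ, of "k+1"] w unfolding weight_def
      by (meson ereal_less(2) order_less_le_trans)
    have "ereal (restriction_const k) * (ereal (ln (exp 1 + L) ^ k) / ereal L)
        * luxnorm (k+1) w Q = \<infinity>"
      unfolding inf using pos by (simp add: restriction_const_def)
    then show ?thesis by (metis ereal_less_eq(1))
  next
    case 2
    then have L: "0 < L" using E(3) by (simp add: L_def)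
    define a where "a = restriction_const k * ln (exp 1 + L) ^ k / L"
    have a: "0 < a"
      using L one_le_ln_exp1_add[of L] by (simp add: a_def restriction_const_def)
    have "luxnorm k (\<lambda>x. w x * indicator E x) Q \<le> ereal a * luxnorm (k+1) w Q"
    proof (rule luxnorm_le_mult_luxnorm[OF a])
      fix s assume s: "0 < s" and mod: "lux_modular (k+1) w Q s \<le> 1"
      have "exp L = measure lebesgue Q / measure lebesgue E"
        using mQ E(3) by (simp add: L_def)
      then have "young_log k (u / a) \<le> measure lebesgue Q / measure lebesgue E / 2 + young_log (k+1) u / 2"
        if "0 \<le> u" for u
        using young_log_restriction_le[OF L that] by (simp add: a_def)
      then show "lux_modular k (\<lambda>x. w x * indicator E x) Q (a * s) \<le> 1"
        using lux_modular_indicator_le_one[OF Q_meas mQ E w_meas a s _ mod]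
        by blast
    qed
    then show ?thesis using L by (simp add: a_def)
  qed
qed

theorem lemma2p5:
  fixes k :: nat
  assumes "1 \<le> k"
  shows "\<exists>c::real. 0 < c \<and>
    (\<forall>(w :: real^'n \<Rightarrow> real) Q E.
       weight w \<and> is_cube Q \<and> 0 < avg w Q \<and>
       E \<in> sets lebesgue \<and> E \<subset> Q \<and> 0 < measure lebesgue E \<longrightarrow>
       (let F = ereal ((ln (exp 1 + ln (measure lebesgue Q / measure lebesgue E))) ^ k)
                / ereal (ln (measure lebesgue Q / measure lebesgue E))
        in luxnorm k (\<lambda>x. w x * indicator E x) Q \<le> ereal c * F * luxnorm (k + 1) w Q
         \<and> luxnorm k (\<lambda>x. w x * indicator E x) Q
             \<le> ereal c * F * rho (k + 1) w Q * ereal (avg w Q)))"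
proof (intro exI[of _ "restriction_const k"] conjI allI impI)
  show "0 < restriction_const k" by (simp add: restriction_const_def)
  fix w :: "real^'n \<Rightarrow> real" and Q E
  assume "weight w \<and> is_cube Q \<and> 0 < avg w Q \<and>
    E \<in> sets lebesgue \<and> E \<subset> Q \<and> 0 < measure lebesgue E"
  then have "luxnorm k (\<lambda>x. w x * indicator E x) Q
      \<le> ereal (restriction_const k)
        * (ereal (ln (exp 1 + ln (measure lebesgue Q / measure lebesgue E)) ^ k)
          / ereal (ln (measure lebesgue Q / measure lebesgue E)))
        * luxnorm (k+1) w Q"
    and "rho (k+1) w Q * ereal (avg w Q) = luxnorm (k+1) w Q"
    using luxnorm_indicator_le[of w Q E k] rho_mult_avg[of w Q "k+1"] by auto
  then show "let F = ereal ((ln (exp 1 + ln (measure lebesgue Q / measure lebesgue E))) ^ k)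
                / ereal (ln (measure lebesgue Q / measure lebesgue E))
        in luxnorm k (\<lambda>x. w x * indicator E x) Q \<le> ereal (restriction_const k) * F * luxnorm (k + 1) w Q
         \<and> luxnorm k (\<lambda>x. w x * indicator E x) Q
             \<le> ereal (restriction_const k) * F * rho (k + 1) w Q * ereal (avg w Q)"
    by (simp only: Let_def mult.assoc)
qed

end
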